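(* Let $R$ be an abelian Rickart $*$-ring and $a,b\in R$. The following are equivalent: (i) $a\leq b$ in the natural partial order; (ii) there exists a projection $e\in R$ with $a=ae=be$; (iii) $ab=a^2=ba$.
   Context: A projection is $e$ with $e=e^2=e^*$. A Rickart $*$-ring is a $*$-ring in which the right annihilator $\{x: ax=0\}$ of every element $a$ is of the form $eR$ for a projection $e$ (such rings have unity). A ring is abelian if all its idempotents are central. Natural partial order: $a\leq b$ iff there is $x\in R$ with $a=xa=xb=ax^*=bx^*$. *)

theory Defs
  imports Main
begin

definition star_ring :: "('a::ring \<Rightarrow> 'a) \<Rightarrow> bool" where
  "star_ring st \<longleftrightarrow>
     (\<forall>x y. st (x + y) = st x + st y) \<and>
     (\<forall>x y. st (x * y) = st y * st x) \<and>
     (\<forall>x. st (st x) = x)"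

definition projection :: "('a::ring \<Rightarrow> 'a) \<Rightarrow> 'a \<Rightarrow> bool" where
  "projection st e \<longleftrightarrow> e = e * e \<and> e = st e"

definition right_annihilator :: "'a::ring \<Rightarrow> 'a set" where
  "right_annihilator a = {x. a * x = 0}"

definition rickart_star_ring :: "('a::ring \<Rightarrow> 'a) \<Rightarrow> bool" where
  "rickart_star_ring st \<longleftrightarrow> star_ring st \<and>
     (\<forall>a::'a. \<exists>e. projection st e \<and> right_annihilator a = {e * r | r. True})"

definition abelian_ring :: "'a::ring itself \<Rightarrow> bool" where
  "abelian_ring _ \<longleftrightarrow> (\<forall>e::'a. e * e = e \<longrightarrow> (\<forall>x. e * x = x * e))"

definition natural_le :: "('a::ring \<Rightarrow> 'a) \<Rightarrow> 'a \<Rightarrow> 'a \<Rightarrow> bool" where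
  "natural_le st a b \<longleftrightarrow>
     (\<exists>x. a = x * a \<and> a = x * b \<and> a = a * st x \<and> a = b * st x)"

end

theory Submission
  imports Defs
begin

text \<open>Let \<open>e\<close> be the projection generating the right annihilator of \<open>a - b\<close>; then \<open>a e = b e\<close>
  always, so all three conditions reduce to \<open>a = a e\<close>. Centrality of \<open>e\<close> gives this from
  \<open>(a - b) a = 0\<close> (condition (iii)) and from \<open>(a - b) x\<^sup>* = 0\<close>, \<open>a = a x\<^sup>*\<close> (the natural order);
  conversely any projection \<open>f\<close> with \<open>a = a f = b f\<close> is itself a witness for (i) and (iii).\<close>

lemma abelian_idempotent_commute:
  fixes e x :: "'a::ring"
  assumes "abelian_ring TYPE('a)" and "e * e = e"
  shows "e * x = x * e"
  using assms unfolding abelian_ring_def by blast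

lemma rickart_annihilator_projection:
  fixes c :: "'a::ring"
  assumes "rickart_star_ring st"
  obtains e where "projection st e" and "c * e = 0" and "\<And>y. c * y = 0 \<Longrightarrow> e * y = y"
proof -
  obtain e where e: "projection st e" and ann: "right_annihilator c = {e * r | r. True}"
    using assms unfolding rickart_star_ring_def by blast
  have idem: "e * e = e"
    using e unfolding projection_def by simp
  have "e \<in> right_annihilator c"
    unfolding ann by (metis (mono_tags) idem mem_Collect_eq)
  then have "c * e = 0"
    unfolding right_annihilator_def by simp
  moreover have "e * y = y" if "c * y = 0" for y
  proof -
    have "y \<in> right_annihilator c"
      unfolding right_annihilator_def using that by simp
    then obtain r where "y = e * r"
      unfolding ann by blast
    then show ?thesis
      using idem by (simp add: mult.assoc[symmetric])
  qed
  ultimately show thesis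
    by (rule that[OF e])
qed

lemma projection_le_imp_natural_le:
  fixes a b :: "'a::ring"
  assumes "abelian_ring TYPE('a)" and "projection st f" and "a = a * f" and "a = b * f"
  shows "natural_le st a b"
proof -
  have idem: "f * f = f" and self_adjoint: "st f = f"
    using assms(2) unfolding projection_def by auto
  have "a = f * a" and "a = f * b"
    using abelian_idempotent_commute[OF assms(1) idem] assms(3,4) by simp_all
  then show ?thesis
    unfolding natural_le_def using assms(3,4) self_adjoint by metis
qed

lemma idempotent_le_imp_squares:
  fixes a b :: "'a::ring"
  assumes "abelian_ring TYPE('a)" and "f * f = f" and "a = a * f" and "a = b * f"
  shows "a * b = a * a \<and> a * a = b * a"
proof
  have comm: "f * x = x * f" for x
    using abelian_idempotent_commute[OF assms(1,2)] .
  have "a * b = (a * f) * b"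
    using assms(3) by (rule arg_cong)
  then have "a * b = a * (f * b)"
    by (simp add: mult.assoc)
  then show "a * b = a * a"
    by (simp add: comm flip: assms(4))
  have "b * a = (b * f) * a"
    by (simp add: comm mult.assoc flip: assms(3))
  then show "a * a = b * a"
    by (simp flip: assms(4))
qed

lemma abelian_rickart_right_factor_imp_projection:
  fixes a b y :: "'a::ring"
  assumes "rickart_star_ring st" and "abelian_ring TYPE('a)" and "a = a * y" and "a = b * y"
  shows "\<exists>e. projection st e \<and> a = a * e \<and> a = b * e"
proof -
  obtain e where e: "projection st e" and ann: "(a - b) * e = 0"
    and absorb: "\<And>y. (a - b) * y = 0 \<Longrightarrow> e * y = y"
    using rickart_annihilator_projection[OF assms(1)] by blast
  have idem: "e * e = e"
    using e unfolding projection_def by simp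
  have comm: "e * a = a * e"
    using abelian_idempotent_commute[OF assms(2) idem] .
  have "(a - b) * y = a * y - b * y"
    by (rule left_diff_distrib)
  also have "\<dots> = 0"
    by (simp flip: assms(3,4))
  finally have "e * y = y"
    by (rule absorb)
  have "a = a * y"
    by (fact assms(3))
  also have "\<dots> = (a * e) * y"
    using \<open>e * y = y\<close> by (simp add: mult.assoc)
  also have "\<dots> = e * (a * y)"
    by (simp add: comm flip: mult.assoc)
  also have "\<dots> = a * e"
    by (simp add: comm flip: assms(3))
  finally have "a = a * e" .
  moreover have "a * e = b * e"
    using ann by (simp add: algebra_simps)
  ultimately show ?thesis
    using e by metis
qed

lemma abelian_rickart_square_imp_projection:
  fixes a b :: "'a::ring"
  assumes "rickart_star_ring st" and "abelian_ring TYPE('a)" and "a * a = b * a"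
  shows "\<exists>e. projection st e \<and> a = a * e \<and> a = b * e"
proof -
  obtain e where e: "projection st e" and ann: "(a - b) * e = 0"
    and absorb: "\<And>y. (a - b) * y = 0 \<Longrightarrow> e * y = y"
    using rickart_annihilator_projection[OF assms(1)] by blast
  have idem: "e * e = e"
    using e unfolding projection_def by simp
  have "(a - b) * a = 0"
    using assms(3) by (simp add: algebra_simps)
  then have "a = a * e"
    using absorb abelian_idempotent_commute[OF assms(2) idem, of a] by simp
  moreover have "a * e = b * e"
    using ann by (simp add: algebra_simps)
  ultimately show ?thesis
    using e by metis
qed

theorem mainTheorem8:
  fixes st :: "'a::ring \<Rightarrow> 'a" and a b :: 'a
  assumes "rickart_star_ring st"
    and "abelian_ring TYPE('a)"
  shows "(natural_le st a b \<longleftrightarrow> (\<exists>e. projection st e \<and> a = a * e \<and> a = b * e))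
       \<and> ((\<exists>e. projection st e \<and> a = a * e \<and> a = b * e) \<longleftrightarrow> (a * b = a * a \<and> a * a = b * a))"
proof -
  let ?proj = "\<exists>e. projection st e \<and> a = a * e \<and> a = b * e"
  have "?proj" if "natural_le st a b"
  proof -
    from that obtain x where "a = a * st x" and "a = b * st x"
      unfolding natural_le_def by blast
    then show ?thesis
      by (rule abelian_rickart_right_factor_imp_projection[OF assms])
  qed
  moreover have "natural_le st a b \<and> a * b = a * a \<and> a * a = b * a" if ?proj
  proof -
    from that obtain e where e: "projection st e" and "a = a * e" and "a = b * e"
      by blast
    then have "e * e = e"
      unfolding projection_def by simp
    then show ?thesis
      using projection_le_imp_natural_le[OF assms(2) e] idempotent_le_imp_squares[OF assms(2)]
        \<open>a = a * e\<close> \<open>a = b * e\<close> by blast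
  qed
  moreover have ?proj if "a * a = b * a"
    using abelian_rickart_square_imp_projection[OF assms that] .
  ultimately show ?thesis
    by blast
qed

end
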